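(* Let $z=(z_1,\ldots,z_n)$ be a sequence of nonnegative real numbers, and let $f_z(a)=\sum_{i=1}^n |z_i-a_i|$ for $a\in\mathbb{R}^n$. Let $d\in DS_n$ be a minimizer of $f_z$ over $DS_n$. Then there exists $d^*\in DS_n$ such that $d^*_i\le \lceil z_i\rceil$ for all $i$ and $f_z(d^* )=f_z(d)$.
   Context: All graphs are simple (no loops, no multiple edges) on the vertex set $\{1,\ldots,n\}$. The degree sequence of such a graph is the vector $(d_1,\ldots,d_n)$ where $d_i$ is the number of neighbours of vertex $i$. $DS_n$ denotes the set of all degree sequences of simple graphs on $\{1,\ldots,n\}$. $\lceil x\rceil$ is the ceiling of $x$. *)

theory Defs
  imports Complex_Main
begin

definition simple_graph :: "nat \<Rightarrow> nat set set \<Rightarrow> bool" where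
  "simple_graph n E \<longleftrightarrow> (\<forall>e\<in>E. e \<subseteq> {1..n} \<and> card e = 2)"

definition degree :: "nat set set \<Rightarrow> nat \<Rightarrow> nat" where
  "degree E i = card {e\<in>E. i \<in> e}"

(* DS_n: degree sequences (d_1,...,d_n), represented as functions nat => nat
   (values outside {1..n} are 0 automatically, as no edge contains such a vertex). *)
definition DS :: "nat \<Rightarrow> (nat \<Rightarrow> nat) set" where
  "DS n = {degree E | E. simple_graph n E}"

definition fz :: "nat \<Rightarrow> (nat \<Rightarrow> real) \<Rightarrow> (nat \<Rightarrow> real) \<Rightarrow> real" where
  "fz n z a = (\<Sum>i=1..n. \<bar>z i - a i\<bar>)"

end

theory Submission
  imports Defs
begin

text \<open>Among all graphs whose degree sequence attains the minimum of \<open>f\<^sub>z\<close>, take one with the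
fewest edges. If some vertex \<open>i\<close> had degree \<open>d\<^sub>i > \<lceil>z\<^sub>i\<rceil>\<close>, delete an edge \<open>{i,j}\<close>: the
\<open>i\<close>-th term of \<open>f\<^sub>z\<close> drops by exactly \<open>1\<close> (as \<open>d\<^sub>i - 1 \<ge> z\<^sub>i\<close>) and the \<open>j\<close>-th term grows by
at most \<open>1\<close>, so the smaller graph is again a minimiser, a contradiction.\<close>

lemma fz_le_decrease_pair:
  fixes a b z :: "nat \<Rightarrow> real"
  assumes "i \<in> {1..n}" "j \<in> {1..n}" "i \<noteq> j"
    and "z i \<le> a i - 1" "b i = a i - 1" "b j = a j - 1"
    and "\<And>k. k \<noteq> i \<Longrightarrow> k \<noteq> j \<Longrightarrow> b k = a k"
  shows "fz n z b \<le> fz n z a"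
proof -
  have "\<bar>z k - b k\<bar> \<le> \<bar>z k - a k\<bar> - (if k = i then 1 else 0) + (if k = j then 1 else 0)" for k
    using assms(3-7) by (cases "k = i"; cases "k = j") auto
  then have "fz n z b \<le> (\<Sum>k=1..n. \<bar>z k - a k\<bar> - (if k = i then 1 else 0) + (if k = j then 1 else 0))"
    unfolding fz_def by (rule sum_mono)
  also have "\<dots> = fz n z a"
    using assms(1,2) by (simp add: fz_def sum.distrib sum_subtractf)
  finally show ?thesis .
qed

lemma simple_graph_finite: "simple_graph n E \<Longrightarrow> finite E"
  by (rule finite_subset[of E "Pow {1..n}"]) (auto simp: simple_graph_def)

lemma simple_graph_Diff: "simple_graph n E \<Longrightarrow> simple_graph n (E - F)"
  by (simp add: simple_graph_def)

lemma degree_Diff_singleton: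
  assumes "finite E" "e \<in> E"
  shows "degree (E - {e}) k = (if k \<in> e then degree E k - 1 else degree E k)"
proof -
  have "{x \<in> E - {e}. k \<in> x} = {x \<in> E. k \<in> x} - {e}" by auto
  then show ?thesis
    using assms by (simp add: degree_def card_Diff_singleton_if)
qed

lemma degree_pos:
  assumes "finite E" "e \<in> E" "k \<in> e"
  shows "0 < degree E k"
  using assms unfolding degree_def by (auto simp: card_gt_0_iff)

lemma fz_degree_remove_edge_le:
  assumes sg: "simple_graph n E" and i: "i \<in> {1..n}" and zi: "0 \<le> z i"
    and big: "of_int \<lceil>z i\<rceil> < real (degree E i)"
  obtains e where "e \<in> E"
    and "fz n z (\<lambda>k. real (degree (E - {e}) k)) \<le> fz n z (\<lambda>k. real (degree E k))"
proof -
  have fin: "finite E" using sg by (rule simple_graph_finite)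
  have "int (degree E i) \<ge> \<lceil>z i\<rceil> + 1" using big by linarith
  then have zi_le: "z i \<le> real (degree E i) - 1" by linarith
  with zi have "0 < degree E i" by linarith
  then obtain e where e: "e \<in> E" "i \<in> e" by (auto simp: degree_def card_gt_0_iff)
  then have "card e = 2" "e \<subseteq> {1..n}" using sg by (auto simp: simple_graph_def)
  then obtain j where j: "e = {i, j}" "i \<noteq> j" "j \<in> {1..n}"
    using e(2) by (auto simp: card_2_iff doubleton_eq_iff)
  have "j \<in> e" using j(1) by simp
  then have "0 < degree E j" by (rule degree_pos[OF fin e(1)])
  show ?thesis
  proof (rule that[OF e(1)], rule fz_le_decrease_pair[where i = i and j = j])
    show "real (degree (E - {e}) i) = real (degree E i) - 1"
      using \<open>0 < degree E i\<close> e(2) by (simp add: degree_Diff_singleton[OF fin e(1)] of_nat_diff)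
    show "real (degree (E - {e}) j) = real (degree E j) - 1"
      using \<open>0 < degree E j\<close> \<open>j \<in> e\<close> by (simp add: degree_Diff_singleton[OF fin e(1)] of_nat_diff)
    show "real (degree (E - {e}) k) = real (degree E k)" if "k \<noteq> i" "k \<noteq> j" for k
      using that j(1) degree_Diff_singleton[OF fin e(1), of k] by simp
  qed (use i j zi_le in auto)
qed

theorem lemma5:
  fixes n :: nat and z :: "nat \<Rightarrow> real" and d :: "nat \<Rightarrow> nat"
  assumes nonneg: "\<forall>i\<in>{1..n}. z i \<ge> 0"
    and dDS: "d \<in> DS n"
    and dmin: "\<forall>a\<in>DS n. fz n z (\<lambda>i. real (d i)) \<le> fz n z (\<lambda>i. real (a i))"
  shows "\<exists>d'\<in>DS n. (\<forall>i\<in>{1..n}. real (d' i) \<le> of_int \<lceil>z i\<rceil>)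
           \<and> fz n z (\<lambda>i. real (d' i)) = fz n z (\<lambda>i. real (d i))"
proof -
  define optimal where "optimal E \<longleftrightarrow> simple_graph n E
    \<and> fz n z (\<lambda>i. real (degree E i)) = fz n z (\<lambda>i. real (d i))" for E
  obtain E0 where "optimal E0" using dDS by (auto simp: DS_def optimal_def)
  then obtain E where E: "optimal E" and fewest: "\<And>F. optimal F \<Longrightarrow> card E \<le> card F"
    using ex_has_least_nat[of optimal E0 card] by blast
  have "real (degree E i) \<le> of_int \<lceil>z i\<rceil>" if i: "i \<in> {1..n}" for i
  proof (rule ccontr)
    assume "\<not> ?thesis"
    then obtain e where e: "e \<in> E"
      and le: "fz n z (\<lambda>k. real (degree (E - {e}) k)) \<le> fz n z (\<lambda>k. real (degree E k))"
      using fz_degree_remove_edge_le[of n E i z] E i nonneg by (auto simp: optimal_def)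
    have sg: "simple_graph n (E - {e})" using E simple_graph_Diff by (auto simp: optimal_def)
    then have "degree (E - {e}) \<in> DS n" by (auto simp: DS_def)
    with dmin le E sg have "optimal (E - {e})" by (fastforce simp: optimal_def)
    moreover have "card (E - {e}) < card E"
      using E e by (intro card_Diff1_less) (auto simp: optimal_def simple_graph_finite)
    ultimately show False using fewest by fastforce
  qed
  moreover have "degree E \<in> DS n" using E by (auto simp: DS_def optimal_def)
  ultimately show ?thesis using E unfolding optimal_def by blast
qed

end
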